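(* Let $\Gamma$ be a finite monoid generating set of $V$. For $z \in \{0,1\}^+$ define $L_z = \{w \in \Gamma^+ : w(z0^\omega) \neq z0^\omega\}$. Then $L_z \subseteq \mathrm{cowp}_\Gamma(V)$, and $L_z^{\mathrm{rev}}$ is a deterministic context-free language over the alphabet $\Gamma$.
   Context: Thompson group $V$: a prefix code is a set $P \subseteq \{0,1\}^*$ in which no element is a proper prefix of another; it is maximal if it is contained in no larger prefix code. Each bijection $\varphi: P\to Q$ between finite maximal prefix codes defines a homeomorphism of the Cantor space $\{0,1\}^\omega$ by $pt \mapsto \varphi(p)t$ ($p\in P$, $t \in\{0,1\}^\omega$); $V$ is the group of all such homeomorphisms under composition. A monoid generating set $\Gamma \subseteq V$ is a set such that every element of $V$ is a product of elements of $\Gamma$; it is regarded as a finite alphabet. For $w = a_n \cdots a_1\in\Gamma^+$, $w(\cdot)$ denotes the homeomorphism $a_n\circ\cdots\circ a_1$ ($a_1$ applied first). $\mathrm{cowp}_\Gamma(V) = \{w\in\Gamma^* : w \text{ does not evaluate to the identity of } V\}$. $0^\omega$ is the all-zero sequence. $L^{\mathrm{rev}} = \{w^{\mathrm{rev}}: w\in L\}$ with $(a_1\cdots a_n)^{\mathrm{rev}} = a_n\cdots a_1$. *)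

theory Defs
  imports Main "HOL-Library.Sublist"
begin

type_synonym cantor = "nat \<Rightarrow> bool"

definition conc :: "bool list \<Rightarrow> cantor \<Rightarrow> cantor" where
  "conc p t = (\<lambda>n. if n < length p then p ! n else t (n - length p))"

definition zeros :: cantor where
  "zeros = (\<lambda>_. False)"

definition prefix_code :: "bool list set \<Rightarrow> bool" where
  "prefix_code P \<longleftrightarrow> (\<forall>p\<in>P. \<forall>q\<in>P. prefix p q \<longrightarrow> p = q)"

definition maximal_prefix_code :: "bool list set \<Rightarrow> bool" where
  "maximal_prefix_code P \<longleftrightarrow> prefix_code P \<and>
     (\<forall>P'. prefix_code P' \<and> P \<subseteq> P' \<longrightarrow> P' = P)"

definition thompson_V :: "(cantor \<Rightarrow> cantor) set" where
  "thompson_V = {f. \<exists>P Q \<phi>. finite P \<and> finite Q \<and> maximal_prefix_code P \<and>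
      maximal_prefix_code Q \<and> bij_betw \<phi> P Q \<and>
      (\<forall>p\<in>P. \<forall>t. f (conc p t) = conc (\<phi> p) t)}"

text \<open>Evaluation of a word: the list [a_n, ..., a_1] evaluates to a_n o ... o a_1
  (a_1, the last list element, is applied first).\<close>
definition eval_word :: "(cantor \<Rightarrow> cantor) list \<Rightarrow> cantor \<Rightarrow> cantor" where
  "eval_word w = foldr (\<circ>) w id"

definition monoid_generating_set :: "(cantor \<Rightarrow> cantor) set \<Rightarrow> bool" where
  "monoid_generating_set \<Gamma> \<longleftrightarrow> \<Gamma> \<subseteq> thompson_V \<and>
     (\<forall>f\<in>thompson_V. \<exists>w\<in>lists \<Gamma>. eval_word w = f)"

definition cowp :: "(cantor \<Rightarrow> cantor) set \<Rightarrow> (cantor \<Rightarrow> cantor) list set" where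
  "cowp \<Gamma> = {w \<in> lists \<Gamma>. eval_word w \<noteq> id}"

record ('s, 'a, 'g) dpda =
  states :: "'s set"
  init :: 's
  finals :: "'s set"
  stack_syms :: "'g set"
  init_stack :: 'g
  delta :: "'s \<Rightarrow> 'a option \<Rightarrow> 'g \<Rightarrow> ('s \<times> 'g list) option"

text \<open>Well-formed DPDA with input alphabet Sigma (None = epsilon move).\<close>
definition dpda_wf :: "'a set \<Rightarrow> ('s, 'a, 'g) dpda \<Rightarrow> bool" where
  "dpda_wf \<Sigma> M \<longleftrightarrow> finite \<Sigma> \<and> finite (states M) \<and> finite (stack_syms M) \<and>
     init M \<in> states M \<and> finals M \<subseteq> states M \<and> init_stack M \<in> stack_syms M \<and>
     (\<forall>q x Z p \<beta>. delta M q x Z = Some (p, \<beta>) \<longrightarrow>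
        q \<in> states M \<and> Z \<in> stack_syms M \<and> p \<in> states M \<and> set \<beta> \<subseteq> stack_syms M \<and>
        (\<forall>a. x = Some a \<longrightarrow> a \<in> \<Sigma>)) \<and>
     (\<forall>q Z a. delta M q None Z \<noteq> None \<longrightarrow> delta M q (Some a) Z = None)"

text \<open>Configurations: (state, remaining input, stack with top first).\<close>
inductive dpda_step :: "('s, 'a, 'g) dpda \<Rightarrow> ('s \<times> 'a list \<times> 'g list) \<Rightarrow>
    ('s \<times> 'a list \<times> 'g list) \<Rightarrow> bool" for M where
  eps: "delta M q None Z = Some (p, \<beta>) \<Longrightarrow> dpda_step M (q, w, Z # \<gamma>) (p, w, \<beta> @ \<gamma>)"
| read: "delta M q (Some a) Z = Some (p, \<beta>) \<Longrightarrow> dpda_step M (q, a # w, Z # \<gamma>) (p, w, \<beta> @ \<gamma>)"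

definition dpda_lang :: "('s, 'a, 'g) dpda \<Rightarrow> 'a list set" where
  "dpda_lang M = {w. \<exists>q \<gamma>. q \<in> finals M \<and>
      (dpda_step M)\<^sup>*\<^sup>* (init M, w, [init_stack M]) (q, [], \<gamma>)}"

text \<open>Deterministic context-free language over alphabet Sigma. States and stack
  symbols are taken from nat (any finite sets can be encoded there).\<close>
definition dcfl :: "'a set \<Rightarrow> 'a list set \<Rightarrow> bool" where
  "dcfl \<Sigma> L \<longleftrightarrow> (\<exists>M :: (nat, 'a, nat) dpda. dpda_wf \<Sigma> M \<and> dpda_lang M = L)"

definition L_z :: "(cantor \<Rightarrow> cantor) set \<Rightarrow> bool list \<Rightarrow> (cantor \<Rightarrow> cantor) list set" where
  "L_z \<Gamma> z = {w \<in> lists \<Gamma>. w \<noteq> [] \<and> eval_word w (conc z zeros) \<noteq> conc z zeros}"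

end

theory Submission
  imports Defs "HOL-Library.Countable"
begin

text \<open>Every element of \<open>V\<close> maps eventually-zero sequences to eventually-zero sequences, so
  the image of \<open>z 0\<^sup>\<omega>\<close> under a prefix of the (reversed) input is \<open>u 0\<^sup>\<omega>\<close> for a finite
  word \<open>u\<close>, which a pushdown automaton keeps on its stack. To apply a generator \<open>g\<close> it pops
  bits (reading the bottom of the stack as further zeros) until they form a codeword \<open>p\<close> of
  the domain code of \<open>g\<close>, and pushes \<open>\<phi> p\<close>. Whether the current point is \<open>z 0\<^sup>\<omega>\<close> is not
  visible in the finite control, so every cell also records for each suffix of \<open>z\<close> whether the
  sequence from that cell on equals it followed by zeros; this vector is computed from the one
  below when a bit is pushed.\<close>

lemma conc_Nil [simp]: "conc [] t = t"
  by (simp add: conc_def)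

lemma conc_append: "conc (u @ v) t = conc u (conc v t)"
  by (auto simp: conc_def fun_eq_iff nth_append)

lemma conc_Cons: "conc (b # v) t = conc [b] (conc v t)"
  using conc_append[of "[b]" v t] by simp

lemma conc_singleton_eq_iff: "conc [b] t = conc [c] s \<longleftrightarrow> b = c \<and> t = s"
proof
  assume eq: "conc [b] t = conc [c] s"
  have "t n = s n" for n
    using fun_cong[OF eq, of "Suc n"] by (simp add: conc_def)
  then show "b = c \<and> t = s"
    using fun_cong[OF eq, of 0] by (auto simp: conc_def)
qed simp

lemma conc_False_zeros [simp]: "conc [False] zeros = zeros"
  by (auto simp: conc_def zeros_def)

lemma conc_eq_imp_prefix:
  assumes "conc u s = conc v t"
  shows "prefix u v \<or> prefix v u"
proof -
  have "u ! k = v ! k" if "k < length u" "k < length v" for k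
    using fun_cong[OF assms, of k] that by (simp add: conc_def)
  then have "take (min (length u) (length v)) u = take (min (length u) (length v)) v"
    by (intro nth_equalityI) auto
  then show ?thesis
    by (metis min.absorb1 min.absorb2 nat_le_linear take_all take_is_prefix)
qed

lemma maximal_prefix_code_nonempty: "maximal_prefix_code P \<Longrightarrow> P \<noteq> {}"
  unfolding maximal_prefix_code_def prefix_code_def by auto

text \<open>If no element of \<open>P\<close> is a prefix of \<open>x\<close>, then a prefix of \<open>x\<close> longer than every
  element of \<open>P\<close> could be added to \<open>P\<close>.\<close>
lemma maximal_prefix_code_covers:
  assumes "finite P" "maximal_prefix_code P"
  shows "\<exists>p\<in>P. \<exists>t. x = conc p t"
proof (rule ccontr)
  assume uncovered: "\<not> ?thesis"
  obtain K where K: "\<And>p. p \<in> P \<Longrightarrow> length p < K"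
    using finite_maxlen[OF assms(1)] by blast
  define q where "q = map x [0..<K]"
  have not_prefix_q: "\<not> prefix p q" if "p \<in> P" for p
  proof
    assume "prefix p q"
    then obtain ys where q: "q = p @ ys"
      by (auto simp: prefix_def)
    have "x k = conc p (\<lambda>n. x (n + length p)) k" for k
    proof (cases "k < length p")
      case True
      then have "p ! k = q ! k"
        by (simp add: q nth_append)
      then show ?thesis
        using True K[OF that] by (simp add: conc_def q_def)
    qed (simp add: conc_def)
    then have "x = conc p (\<lambda>n. x (n + length p))" ..
    with uncovered that show False by blast
  qed
  have "\<not> prefix q p" if "p \<in> P" for p
    using K[OF that] prefix_length_le by (fastforce simp: q_def)
  with not_prefix_q assms(2) have "prefix_code (insert q P)"
    unfolding maximal_prefix_code_def prefix_code_def by auto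
  with assms(2) have "q \<in> P"
    unfolding maximal_prefix_code_def by blast
  with not_prefix_q show False by blast
qed

lemma maximal_prefix_code_extend:
  assumes "finite P" "maximal_prefix_code P" "p \<in> P" "prefix r p" "r \<notin> P"
  shows "\<exists>p'\<in>P. prefix (r @ [b]) p'"
proof -
  obtain p' t where p': "p' \<in> P" "conc (r @ [b]) zeros = conc p' t"
    using maximal_prefix_code_covers[OF assms(1,2)] by blast
  have "\<not> prefix p' r"
  proof
    assume "prefix p' r"
    then have "prefix p' p"
      using assms(4) by (rule prefix_order.trans)
    with assms(2,3) p'(1) have "p' = p"
      by (simp add: maximal_prefix_code_def prefix_code_def)
    with \<open>prefix p' r\<close> assms(3-5) show False
      using prefix_order.antisym by blast
  qed
  moreover have "prefix (r @ [b]) p' \<or> prefix p' (r @ [b])"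
    using conc_eq_imp_prefix[OF p'(2)] .
  ultimately show ?thesis
    using p'(1) by (auto simp: prefix_snoc)
qed

lemma eval_word_Nil [simp]: "eval_word [] = id"
  by (simp add: eval_word_def)

lemma eval_word_Cons [simp]: "eval_word (f # w) = f \<circ> eval_word w"
  by (simp add: eval_word_def)

lemma eval_word_snoc: "eval_word (w @ [f]) = eval_word w \<circ> f"
  by (induction w) (simp_all add: comp_assoc)

lemma dpda_step_Nil: "\<not> dpda_step M (q, w, []) c"
  by (auto elim: dpda_step.cases)

lemma dpda_step_Cons_iff:
  "dpda_step M (q, w, Z # \<gamma>) c \<longleftrightarrow>
     (\<exists>p \<beta>. delta M q None Z = Some (p, \<beta>) \<and> c = (p, w, \<beta> @ \<gamma>)) \<or>
     (\<exists>a w' p \<beta>. w = a # w' \<and> delta M q (Some a) Z = Some (p, \<beta>) \<and> c = (p, w', \<beta> @ \<gamma>))"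
  by (auto simp: dpda_step.simps)

definition dpda_rename :: "('s \<Rightarrow> 't) \<Rightarrow> ('g \<Rightarrow> 'h) \<Rightarrow> ('s, 'a, 'g) dpda \<Rightarrow> ('t, 'a, 'h) dpda" where
  "dpda_rename f h M =
     \<lparr>states = f ` states M, init = f (init M), finals = f ` finals M,
      stack_syms = h ` stack_syms M, init_stack = h (init_stack M),
      delta = (\<lambda>q x Z. if q \<in> range f \<and> Z \<in> range h
         then map_option (\<lambda>(p, \<beta>). (f p, map h \<beta>)) (delta M (inv f q) x (inv h Z)) else None)\<rparr>"

context
  fixes f :: "'s \<Rightarrow> 't" and h :: "'g \<Rightarrow> 'h"
  assumes inj: "inj f" "inj h"
begin

lemma delta_dpda_rename:
  "delta (dpda_rename f h M) (f q) x (h Z) = map_option (\<lambda>(p, \<beta>). (f p, map h \<beta>)) (delta M q x Z)"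
  by (simp add: dpda_rename_def inj inv_f_f)

lemma delta_dpda_rename_SomeE:
  assumes "delta (dpda_rename f h M) q x Z = Some (p, \<beta>)"
  obtains q0 Z0 p0 \<beta>0 where "q = f q0" "Z = h Z0" "p = f p0" "\<beta> = map h \<beta>0"
    "delta M q0 x Z0 = Some (p0, \<beta>0)"
  using assms by (auto simp: dpda_rename_def inj inv_f_f split: if_splits)

lemma dpda_wf_rename: "dpda_wf \<Sigma> M \<Longrightarrow> dpda_wf \<Sigma> (dpda_rename f h M)"
  unfolding dpda_wf_def
  apply (intro conjI allI impI; (elim conjE delta_dpda_rename_SomeE)?)
  by (fastforce simp: dpda_rename_def inj inv_f_f split: if_splits)+

lemma dpda_step_rename_iff:
  "dpda_step (dpda_rename f h M) (f q, w, map h \<gamma>) c \<longleftrightarrow>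
     (\<exists>q' w' \<gamma>'. c = (f q', w', map h \<gamma>') \<and> dpda_step M (q, w, \<gamma>) (q', w', \<gamma>'))"
proof (cases \<gamma>)
  case Nil
  then show ?thesis by (simp add: dpda_step_Nil)
next
  case (Cons Z \<gamma>1)
  then show ?thesis
    by (fastforce simp: dpda_step_Cons_iff delta_dpda_rename inj inj_eq inj_map_eq_map
        simp flip: map_append)
qed

lemma rtranclp_dpda_step_rename_iff:
  "(dpda_step (dpda_rename f h M))\<^sup>*\<^sup>* (f q, w, map h \<gamma>) c \<longleftrightarrow>
     (\<exists>q' w' \<gamma>'. c = (f q', w', map h \<gamma>') \<and> (dpda_step M)\<^sup>*\<^sup>* (q, w, \<gamma>) (q', w', \<gamma>'))"
proof
  assume "(dpda_step (dpda_rename f h M))\<^sup>*\<^sup>* (f q, w, map h \<gamma>) c"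
  then show "\<exists>q' w' \<gamma>'. c = (f q', w', map h \<gamma>') \<and> (dpda_step M)\<^sup>*\<^sup>* (q, w, \<gamma>) (q', w', \<gamma>')"
  proof (induction rule: rtranclp_induct)
    case (step c c')
    then show ?case
      by (auto simp: dpda_step_rename_iff inj inj_eq inj_map_eq_map
          intro: rtranclp.rtrancl_into_rtrancl)
  qed blast
next
  assume "\<exists>q' w' \<gamma>'. c = (f q', w', map h \<gamma>') \<and> (dpda_step M)\<^sup>*\<^sup>* (q, w, \<gamma>) (q', w', \<gamma>')"
  then obtain q' w' \<gamma>' where c: "c = (f q', w', map h \<gamma>')"
    and run: "(dpda_step M)\<^sup>*\<^sup>* (q, w, \<gamma>) (q', w', \<gamma>')"
    by blast
  have "(dpda_step (dpda_rename f h M))\<^sup>*\<^sup>* (f q, w, map h \<gamma>) (f q', w', map h \<gamma>')"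
    using run
  proof (induction "(q', w', \<gamma>')" arbitrary: q' w' \<gamma>' rule: rtranclp_induct)
    case (step c)
    obtain q'' w'' \<gamma>'' where c: "c = (q'', w'', \<gamma>'')"
      by (cases c)
    have "dpda_step (dpda_rename f h M) (f q'', w'', map h \<gamma>'') (f q', w', map h \<gamma>')"
      unfolding dpda_step_rename_iff using step.hyps(2) c by blast
    with step.hyps(3) c show ?case
      by (simp add: rtranclp.rtrancl_into_rtrancl)
  qed simp
  with c show "(dpda_step (dpda_rename f h M))\<^sup>*\<^sup>* (f q, w, map h \<gamma>) c"
    by simp
qed

lemma dpda_lang_rename: "dpda_lang (dpda_rename f h M) = dpda_lang M"
proof -
  have "dpda_lang (dpda_rename f h M) = {w. \<exists>q \<gamma>. q \<in> f ` finals M \<and>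
      (dpda_step (dpda_rename f h M))\<^sup>*\<^sup>* (f (init M), w, map h [init_stack M]) (q, [], \<gamma>)}"
    by (simp add: dpda_lang_def dpda_rename_def)
  also have "\<dots> = dpda_lang M"
    unfolding rtranclp_dpda_step_rename_iff
    by (auto simp: dpda_lang_def inj inj_eq inj_image_mem_iff)
  finally show ?thesis .
qed

end

lemma dcfl_dpda_lang:
  fixes M :: "('s :: countable, 'a, 'g :: countable) dpda"
  assumes "dpda_wf \<Sigma> M"
  shows "dcfl \<Sigma> (dpda_lang M)"
  unfolding dcfl_def
  using assms dpda_wf_rename[OF inj_to_nat inj_to_nat] dpda_lang_rename[OF inj_to_nat inj_to_nat]
  by blast

definition suffix_matches :: "bool list \<Rightarrow> cantor \<Rightarrow> bool list" where
  "suffix_matches z t = map (\<lambda>j. t = conc (drop j z) zeros) [0..<Suc (length z)]"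

definition cons_matches :: "bool list \<Rightarrow> bool \<Rightarrow> bool list \<Rightarrow> bool list" where
  "cons_matches z b I =
     map (\<lambda>j. if j < length z then z ! j = b \<and> I ! Suc j else \<not> b \<and> I ! length z)
       [0..<Suc (length z)]"

lemma length_cons_matches [simp]: "length (cons_matches z b I) = Suc (length z)"
  by (simp add: cons_matches_def)

lemma suffix_matches_0: "suffix_matches z t ! 0 \<longleftrightarrow> t = conc z zeros"
  by (simp add: suffix_matches_def nth_map_upt del: upt_Suc)

lemma cons_matches_suffix_matches:
  "cons_matches z b (suffix_matches z t) = suffix_matches z (conc [b] t)"
proof -
  have entry: "(if j < length z then z ! j = b \<and> suffix_matches z t ! Suc j
         else \<not> b \<and> suffix_matches z t ! length z) \<longleftrightarrow> conc [b] t = conc (drop j z) zeros"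
    if "j \<le> length z" for j
  proof (cases "j < length z")
    case True
    then have "conc (drop j z) zeros = conc [z ! j] (conc (drop (Suc j) z) zeros)"
      by (simp add: Cons_nth_drop_Suc flip: conc_Cons)
    with True show ?thesis
      by (auto simp: suffix_matches_def nth_map_upt conc_singleton_eq_iff simp del: upt_Suc)
  next
    case False
    with that have "j = length z"
      by simp
    with False show ?thesis
      using conc_singleton_eq_iff[of b t False zeros]
      by (simp add: suffix_matches_def nth_map_upt del: upt_Suc)
  qed
  show ?thesis
    unfolding cons_matches_def suffix_matches_def[of z "conc [b] t"]
    by (rule map_cong[OF refl], rule entry) auto
qed

lemma foldr_cons_matches:
  "foldr (cons_matches z) v (suffix_matches z t) = suffix_matches z (conc v t)"
  by (induction v) (simp_all add: cons_matches_suffix_matches flip: conc_Cons)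

text \<open>A stack cell carries a bit of the current point together with the match vector of the
  suffix of the point starting at that bit.\<close>
datatype cell = Bottom | Cell bool "bool list"

fun cells :: "bool list \<Rightarrow> bool list \<Rightarrow> bool list \<Rightarrow> cell list" where
  "cells z [] I = []"
| "cells z (b # v) I = Cell b (foldr (cons_matches z) (b # v) I) # cells z v I"

lemma cells_append: "cells z v (foldr (cons_matches z) u I) @ cells z u I = cells z (v @ u) I"
  by (induction v) simp_all

text \<open>The stack representing the point \<open>u 0\<^sup>\<omega>\<close>; its bottom stands for the trailing zeros.\<close>
definition stack :: "bool list \<Rightarrow> bool list \<Rightarrow> cell list" where
  "stack z u = cells z u (suffix_matches z zeros) @ [Bottom]"

lemma stack_Nil [simp]: "stack z [] = [Bottom]"
  by (simp add: stack_def)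

lemma stack_Cons [simp]:
  "stack z (b # u) = Cell b (suffix_matches z (conc (b # u) zeros)) # stack z u"
  by (simp add: stack_def foldr_cons_matches flip: foldr.simps)

fun top_matches :: "bool list \<Rightarrow> cell \<Rightarrow> bool list" where
  "top_matches z Bottom = suffix_matches z zeros"
| "top_matches z (Cell b I) = I"

lemma top_matches_stack:
  "stack z u = Z # \<gamma> \<Longrightarrow> top_matches z Z = suffix_matches z (conc u zeros)"
  by (cases u) auto

lemma cells_push_stack:
  assumes "stack z u = Z # \<gamma>"
  shows "cells z v (top_matches z Z) @ Z # \<gamma> = stack z (v @ u)"
proof -
  have "cells z v (top_matches z Z) @ Z # \<gamma> =
      cells z v (foldr (cons_matches z) u (suffix_matches z zeros)) @ stack z u"
    using assms by (simp add: top_matches_stack foldr_cons_matches)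
  also have "\<dots> = stack z (v @ u)"
    by (simp add: stack_def flip: cells_append)
  finally show ?thesis .
qed

definition cell_alphabet :: "bool list \<Rightarrow> cell set" where
  "cell_alphabet z = insert Bottom {Cell b I | b I. length I = Suc (length z)}"

lemma finite_cell_alphabet: "finite (cell_alphabet z)"
proof -
  have "{Cell b I | b I. length I = Suc (length z)} =
      case_prod Cell ` (UNIV \<times> {I. length I = Suc (length z)})"
    by auto
  then show ?thesis
    using finite_lists_length_eq[of "UNIV :: bool set"]
    by (simp add: cell_alphabet_def)
qed

lemma set_cells_subset: "set (cells z v I) \<subseteq> cell_alphabet z"
  by (induction v) (auto simp: cell_alphabet_def)

lemma set_stack_subset: "set (stack z u) \<subseteq> cell_alphabet z"
  using set_cells_subset by (simp add: stack_def cell_alphabet_def)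

datatype state = Start | Ready bool | Scan nat "bool list"

instance state :: countable
  by countable_datatype

instance cell :: countable
  by countable_datatype

locale prefix_code_generators =
  fixes G :: "(cantor \<Rightarrow> cantor) set" and gs :: "(cantor \<Rightarrow> cantor) list"
    and domain_code :: "(cantor \<Rightarrow> cantor) \<Rightarrow> bool list set"
    and relabel :: "(cantor \<Rightarrow> cantor) \<Rightarrow> bool list \<Rightarrow> bool list"
    and z :: "bool list"
  assumes set_gs: "set gs = G"
    and finite_domain_code: "g \<in> G \<Longrightarrow> finite (domain_code g)"
    and maximal_domain_code: "g \<in> G \<Longrightarrow> maximal_prefix_code (domain_code g)"
    and conc_relabel: "g \<in> G \<Longrightarrow> p \<in> domain_code g \<Longrightarrow> g (conc p t) = conc (relabel g p) t"
begin

definition index :: "(cantor \<Rightarrow> cantor) \<Rightarrow> nat" where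
  "index g = (SOME i. i < length gs \<and> gs ! i = g)"

lemma index: "g \<in> G \<Longrightarrow> index g < length gs \<and> gs ! index g = g"
  unfolding index_def using set_gs by (metis (mono_tags, lifting) in_set_conv_nth someI_ex)

lemma nth_gs_in: "i < length gs \<Longrightarrow> gs ! i \<in> G"
  using set_gs by auto

definition scanned :: "nat \<Rightarrow> bool list set" where
  "scanned i = {r. \<exists>p\<in>domain_code (gs ! i). prefix r p}"

lemma finite_scanned:
  assumes "i < length gs"
  shows "finite (scanned i)"
proof -
  have "scanned i = (\<Union>p\<in>domain_code (gs ! i). set (prefixes p))"
    by (auto simp: scanned_def)
  with assms show ?thesis
    by (simp add: finite_domain_code nth_gs_in)
qed

lemma Nil_in_scanned: "i < length gs \<Longrightarrow> [] \<in> scanned i"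
  using maximal_prefix_code_nonempty maximal_domain_code nth_gs_in by (fastforce simp: scanned_def)

lemma domain_code_subset_scanned: "domain_code (gs ! i) \<subseteq> scanned i"
  by (auto simp: scanned_def)

lemma snoc_in_scanned:
  "i < length gs \<Longrightarrow> r \<in> scanned i \<Longrightarrow> r \<notin> domain_code (gs ! i) \<Longrightarrow> r @ [b] \<in> scanned i"
  using maximal_prefix_code_extend[OF finite_domain_code maximal_domain_code]
  by (fastforce simp: scanned_def nth_gs_in)

definition machine_states :: "state set" where
  "machine_states = {Start, Ready True, Ready False} \<union> {Scan i r | i r. i < length gs \<and> r \<in> scanned i}"

text \<open>The bottom cell is read as a zero but never popped. The flag of \<open>Ready\<close> records
  whether the new point differs from \<open>z 0\<^sup>\<omega>\<close>.\<close>
definition scan_move :: "nat \<Rightarrow> bool list \<Rightarrow> cell \<Rightarrow> (state \<times> cell list) option" where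
  "scan_move i r Z =
     (if r \<in> domain_code (gs ! i) then
        let v = relabel (gs ! i) r; I = top_matches z Z
        in Some (Ready (\<not> foldr (cons_matches z) v I ! 0), cells z v I @ [Z])
      else case Z of
        Bottom \<Rightarrow> Some (Scan i (r @ [False]), [Bottom])
      | Cell b I \<Rightarrow> Some (Scan i (r @ [b]), []))"

definition transition :: "state \<Rightarrow> (cantor \<Rightarrow> cantor) option \<Rightarrow> cell \<Rightarrow> (state \<times> cell list) option" where
  "transition q x Z = (case (q, x) of
      (Start, None) \<Rightarrow> if Z = Bottom then Some (Ready False, stack z z) else None
    | (Ready s, Some g) \<Rightarrow>
        if g \<in> G \<and> Z \<in> cell_alphabet z then Some (Scan (index g) [], [Z]) else None
    | (Scan i r, None) \<Rightarrow>
        if i < length gs \<and> r \<in> scanned i \<and> Z \<in> cell_alphabet z then scan_move i r Z else None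
    | _ \<Rightarrow> None)"

definition machine :: "(state, cantor \<Rightarrow> cantor, cell) dpda" where
  "machine = \<lparr>states = machine_states, init = Start, finals = {Ready True},
     stack_syms = cell_alphabet z, init_stack = Bottom, delta = transition\<rparr>"

lemma finite_machine_states: "finite machine_states"
proof -
  have "{Scan i r | i r. i < length gs \<and> r \<in> scanned i} = (\<Union>i<length gs. Scan i ` scanned i)"
    by auto
  then show ?thesis
    by (simp add: machine_states_def finite_scanned)
qed

lemma scan_move_SomeD:
  assumes "i < length gs" "r \<in> scanned i" "Z \<in> cell_alphabet z" "scan_move i r Z = Some (p, \<beta>)"
  shows "p \<in> machine_states \<and> set \<beta> \<subseteq> cell_alphabet z"
proof (cases "r \<in> domain_code (gs ! i)")
  case True
  with assms show ?thesis
    using set_cells_subset[of z "relabel (gs ! i) r" "top_matches z Z"]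
    by (auto simp: scan_move_def machine_states_def Let_def)
next
  case False
  with assms show ?thesis
    using snoc_in_scanned
    by (auto simp: scan_move_def machine_states_def cell_alphabet_def split: cell.splits)
qed

lemma transition_SomeD:
  assumes "transition q x Z = Some (p, \<beta>)"
  shows "q \<in> machine_states \<and> Z \<in> cell_alphabet z \<and> p \<in> machine_states \<and>
    set \<beta> \<subseteq> cell_alphabet z \<and> (\<forall>g. x = Some g \<longrightarrow> g \<in> G)"
proof (cases q)
  case Start
  with assms show ?thesis
    using set_stack_subset[of z z]
    by (auto simp: transition_def machine_states_def cell_alphabet_def
        split: option.splits if_splits)
next
  case (Ready s)
  with assms show ?thesis
    using index Nil_in_scanned
    by (auto simp: transition_def machine_states_def split: option.splits if_splits)
next
  case (Scan i r)
  with assms show ?thesis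
    using scan_move_SomeD
    by (auto simp: transition_def machine_states_def split: option.splits if_splits)
qed

lemma dpda_wf_machine: "dpda_wf G machine"
proof -
  have "transition q None Z \<noteq> None \<Longrightarrow> transition q (Some g) Z = None" for q Z g
    by (cases q) (simp_all add: transition_def)
  moreover have "finite G"
    using set_gs by auto
  moreover have "Start \<in> machine_states" "Ready True \<in> machine_states"
    by (simp_all add: machine_states_def)
  moreover have "Bottom \<in> cell_alphabet z"
    by (simp add: cell_alphabet_def)
  ultimately show ?thesis
    unfolding dpda_wf_def machine_def dpda.simps
    using finite_machine_states finite_cell_alphabet transition_SomeD by blast
qed

lemma stack_ConsE:
  obtains Z \<gamma> where "stack z u = Z # \<gamma>" "Z \<in> cell_alphabet z"
proof -
  obtain Z \<gamma> where "stack z u = Z # \<gamma>"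
    by (cases "stack z u") (simp_all add: stack_def)
  with set_stack_subset[of z u] that show thesis
    by auto
qed

lemma step_Start:
  "dpda_step machine (Start, w, [Bottom]) c \<longleftrightarrow> c = (Ready False, w, stack z z)"
  by (auto simp: dpda_step_Cons_iff machine_def transition_def)

lemma step_Ready:
  "dpda_step machine (Ready s, w, stack z u) c \<longleftrightarrow>
     (\<exists>g w'. w = g # w' \<and> g \<in> G \<and> c = (Scan (index g) [], w', stack z u))"
proof -
  obtain Z \<gamma> where "stack z u = Z # \<gamma>" "Z \<in> cell_alphabet z"
    by (rule stack_ConsE)
  then show ?thesis
    by (auto simp: dpda_step_Cons_iff machine_def transition_def)
qed

lemma step_Scan_output:
  assumes "i < length gs" "r \<in> domain_code (gs ! i)"
  defines "v \<equiv> relabel (gs ! i) r"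
  shows "dpda_step machine (Scan i r, w, stack z u) c \<longleftrightarrow>
    c = (Ready (conc (v @ u) zeros \<noteq> conc z zeros), w, stack z (v @ u))"
proof -
  obtain Z \<gamma> where Z: "stack z u = Z # \<gamma>" "Z \<in> cell_alphabet z"
    by (rule stack_ConsE)
  have "foldr (cons_matches z) v (top_matches z Z) ! 0 \<longleftrightarrow> conc (v @ u) zeros = conc z zeros"
    using Z(1) by (simp add: top_matches_stack foldr_cons_matches suffix_matches_0 conc_append)
  with assms Z domain_code_subset_scanned cells_push_stack[OF Z(1)] show ?thesis
    by (auto simp: dpda_step_Cons_iff machine_def transition_def scan_move_def Let_def)
qed

lemma step_Scan_pad:
  assumes "i < length gs" "r \<in> scanned i" "r \<notin> domain_code (gs ! i)"
  shows "dpda_step machine (Scan i r, w, stack z []) c \<longleftrightarrow> c = (Scan i (r @ [False]), w, stack z [])"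
  using assms by (auto simp: dpda_step_Cons_iff machine_def transition_def scan_move_def
      cell_alphabet_def)

lemma step_Scan_pop:
  assumes "i < length gs" "r \<in> scanned i" "r \<notin> domain_code (gs ! i)"
  shows "dpda_step machine (Scan i r, w, stack z (b # u)) c \<longleftrightarrow> c = (Scan i (r @ [b]), w, stack z u)"
  using assms by (auto simp: dpda_step_Cons_iff machine_def transition_def scan_move_def
      cell_alphabet_def suffix_matches_def)

definition point :: "(cantor \<Rightarrow> cantor) list \<Rightarrow> cantor" where
  "point pre = eval_word (rev pre) (conc z zeros)"

lemma point_Nil [simp]: "point [] = conc z zeros"
  by (simp add: point_def)

lemma point_snoc [simp]: "point (pre @ [g]) = g (point pre)"
  by (simp add: point_def)

text \<open>In a scanning state, \<open>point pre'\<close> is the argument of the current generator and its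
  prefix \<open>r\<close> has already been popped.\<close>
fun state_inv :: "(cantor \<Rightarrow> cantor) list \<Rightarrow> bool list \<Rightarrow> state \<Rightarrow> bool" where
  "state_inv pre u Start \<longleftrightarrow> pre = [] \<and> u = []"
| "state_inv pre u (Ready s) \<longleftrightarrow>
     conc u zeros = point pre \<and> (s \<longleftrightarrow> pre \<noteq> [] \<and> point pre \<noteq> conc z zeros)"
| "state_inv pre u (Scan i r) \<longleftrightarrow> i < length gs \<and> r \<in> scanned i \<and>
     (\<exists>pre'. pre = pre' @ [gs ! i] \<and> point pre' = conc r (conc u zeros))"

fun config_inv :: "(cantor \<Rightarrow> cantor) list \<Rightarrow> state \<times> (cantor \<Rightarrow> cantor) list \<times> cell list \<Rightarrow> bool" where
  "config_inv v (q, w, \<gamma>) \<longleftrightarrow>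
     (\<exists>pre u. v = pre @ w \<and> set pre \<subseteq> G \<and> \<gamma> = stack z u \<and> state_inv pre u q)"

lemma config_inv_step:
  assumes "dpda_step machine c c'" "config_inv v c"
  shows "config_inv v c'"
proof -
  obtain q w pre u where c: "c = (q, w, stack z u)" and v: "v = pre @ w" "set pre \<subseteq> G"
    and inv: "state_inv pre u q"
    using assms(2) by (cases c) auto
  have step: "dpda_step machine (q, w, stack z u) c'"
    using assms(1) c by simp
  have inv_c': "config_inv v c'"
    if "c' = (q', w', stack z u')" "v = pre' @ w'" "set pre' \<subseteq> G" "state_inv pre' u' q'"
    for q' w' u' pre'
    using that by auto
  show ?thesis
  proof (cases q)
    case Start
    with step inv show ?thesis
      by (intro inv_c'[of _ w z "[]"]) (auto simp: step_Start v)
  next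
    case (Ready s)
    with step obtain g w' where "w = g # w'" "g \<in> G" "c' = (Scan (index g) [], w', stack z u)"
      by (auto simp: step_Ready)
    with inv Ready v show ?thesis
      by (intro inv_c'[of _ w' u "pre @ [g]"]) (auto simp: index Nil_in_scanned)
  next
    case (Scan i r)
    with inv obtain pre' where i: "i < length gs" "r \<in> scanned i"
      and pre: "pre = pre' @ [gs ! i]" "point pre' = conc r (conc u zeros)"
      by auto
    show ?thesis
    proof (cases "r \<in> domain_code (gs ! i)")
      case True
      then have "conc (relabel (gs ! i) r @ u) zeros = point pre"
        using pre i by (simp add: conc_relabel nth_gs_in conc_append)
      with step Scan i True v pre show ?thesis
        by (intro inv_c'[of _ w "relabel (gs ! i) r @ u" pre]) (auto simp: step_Scan_output)
    next
      case False
      show ?thesis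
      proof (cases u)
        case Nil
        with step Scan have "c' = (Scan i (r @ [False]), w, stack z [])"
          using step_Scan_pad[OF i False] by simp
        with i False v pre Nil show ?thesis
          by (intro inv_c'[of "Scan i (r @ [False])" w "[]" pre])
            (auto simp: snoc_in_scanned conc_append)
      next
        case (Cons b u')
        with step Scan have "c' = (Scan i (r @ [b]), w, stack z u')"
          using step_Scan_pop[OF i False] by simp
        with i False v pre Cons show ?thesis
          by (intro inv_c'[of "Scan i (r @ [b])" w u' pre])
            (auto simp: snoc_in_scanned conc_append simp flip: conc_Cons)
      qed
    qed
  qed
qed

lemma dpda_lang_machine_subset: "dpda_lang machine \<subseteq> rev ` L_z G z"
proof
  fix w
  assume "w \<in> dpda_lang machine"
  then obtain \<gamma> where run: "(dpda_step machine)\<^sup>*\<^sup>* (Start, w, [Bottom]) (Ready True, [], \<gamma>)"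
    by (auto simp: dpda_lang_def machine_def)
  have "config_inv w (Start, w, [Bottom])"
    by (auto intro!: exI[of _ "[]"])
  with run have "config_inv w (Ready True, [], \<gamma>)"
    by (induction rule: rtranclp_induct) (auto intro: config_inv_step)
  then have "rev w \<in> L_z G z"
    by (auto simp: L_z_def point_def)
  then show "w \<in> rev ` L_z G z"
    by (metis rev_rev_ident image_eqI)
qed

lemma scan_run:
  assumes "i < length gs" "r \<in> scanned i"
  shows "\<exists>u'. (dpda_step machine)\<^sup>*\<^sup>* (Scan i r, w, stack z u)
      (Ready (conc u' zeros \<noteq> conc z zeros), w, stack z u') \<and>
    conc u' zeros = (gs ! i) (conc r (conc u zeros))"
proof -
  obtain K where K: "\<And>r. r \<in> scanned i \<Longrightarrow> length r < K"
    using finite_maxlen[OF finite_scanned[OF assms(1)]] by blast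
  from assms(2) show ?thesis
  proof (induction "K - length r" arbitrary: r u rule: less_induct)
    case less
    show ?case
    proof (cases "r \<in> domain_code (gs ! i)")
      case True
      then show ?thesis
        using step_Scan_output[OF assms(1) True]
        by (intro exI[of _ "relabel (gs ! i) r @ u"])
          (auto simp: assms(1) conc_relabel nth_gs_in conc_append)
    next
      case False
      have snoc: "r @ [b] \<in> scanned i" "K - length (r @ [b]) < K - length r" for b
        using snoc_in_scanned[OF assms(1) less.prems False] K by fastforce+
      show ?thesis
      proof (cases u)
        case Nil
        obtain u' where "(dpda_step machine)\<^sup>*\<^sup>* (Scan i (r @ [False]), w, stack z [])
            (Ready (conc u' zeros \<noteq> conc z zeros), w, stack z u')"
          "conc u' zeros = (gs ! i) (conc (r @ [False]) (conc [] zeros))"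
          using less.hyps[OF snoc(2) snoc(1)] by blast
        moreover have "dpda_step machine (Scan i r, w, stack z u) (Scan i (r @ [False]), w, stack z [])"
          using step_Scan_pad[OF assms(1) less.prems False] Nil by simp
        ultimately show ?thesis
          using Nil by (intro exI[of _ u']) (auto simp: conc_append intro: converse_rtranclp_into_rtranclp)
      next
        case (Cons b u1)
        obtain u' where "(dpda_step machine)\<^sup>*\<^sup>* (Scan i (r @ [b]), w, stack z u1)
            (Ready (conc u' zeros \<noteq> conc z zeros), w, stack z u')"
          "conc u' zeros = (gs ! i) (conc (r @ [b]) (conc u1 zeros))"
          using less.hyps[OF snoc(2) snoc(1)] by blast
        moreover have "dpda_step machine (Scan i r, w, stack z u) (Scan i (r @ [b]), w, stack z u1)"
          using step_Scan_pop[OF assms(1) less.prems False] Cons by simp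
        ultimately show ?thesis
          using Cons by (intro exI[of _ u'])
            (auto simp: conc_append intro: converse_rtranclp_into_rtranclp simp flip: conc_Cons)
      qed
    qed
  qed
qed

lemma read_run:
  assumes "g \<in> G"
  shows "\<exists>u'. (dpda_step machine)\<^sup>*\<^sup>* (Ready s, g # w, stack z u)
      (Ready (conc u' zeros \<noteq> conc z zeros), w, stack z u') \<and> conc u' zeros = g (conc u zeros)"
proof -
  obtain u' where "(dpda_step machine)\<^sup>*\<^sup>* (Scan (index g) [], w, stack z u)
      (Ready (conc u' zeros \<noteq> conc z zeros), w, stack z u')" "conc u' zeros = g (conc u zeros)"
    using scan_run[of "index g" "[]" w u] index[OF assms] Nil_in_scanned by auto
  moreover have "dpda_step machine (Ready s, g # w, stack z u) (Scan (index g) [], w, stack z u)"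
    using assms by (simp add: step_Ready)
  ultimately show ?thesis
    by (blast intro: converse_rtranclp_into_rtranclp)
qed

lemma word_run:
  assumes "v \<noteq> []" "set v \<subseteq> G"
  shows "\<exists>u'. (dpda_step machine)\<^sup>*\<^sup>* (Ready s, v, stack z u)
      (Ready (conc u' zeros \<noteq> conc z zeros), [], stack z u') \<and>
    conc u' zeros = eval_word (rev v) (conc u zeros)"
  using assms
proof (induction v arbitrary: s u rule: list_nonempty_induct)
  case (single g)
  then show ?case
    using read_run[of g s "[]" u] by simp
next
  case (cons g v)
  then obtain u1 where
    "(dpda_step machine)\<^sup>*\<^sup>* (Ready s, g # v, stack z u)
      (Ready (conc u1 zeros \<noteq> conc z zeros), v, stack z u1)" "conc u1 zeros = g (conc u zeros)"
    using read_run[of g s v u] by auto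
  with cons.IH[of "conc u1 zeros \<noteq> conc z zeros" u1] cons.prems show ?case
    by (auto simp: eval_word_snoc intro: rtranclp_trans)
qed

lemma rev_L_z_subset_dpda_lang_machine: "rev ` L_z G z \<subseteq> dpda_lang machine"
proof
  fix w
  assume "w \<in> rev ` L_z G z"
  then have "w \<noteq> []" "set w \<subseteq> G" "eval_word (rev w) (conc z zeros) \<noteq> conc z zeros"
    by (auto simp: L_z_def)
  then obtain u' where "(dpda_step machine)\<^sup>*\<^sup>* (Ready False, w, stack z z) (Ready True, [], stack z u')"
    using word_run[of w False z] by auto
  then have "(dpda_step machine)\<^sup>*\<^sup>* (Start, w, [Bottom]) (Ready True, [], stack z u')"
    by (rule converse_rtranclp_into_rtranclp[rotated]) (simp add: step_Start)
  then show "w \<in> dpda_lang machine"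
    by (auto simp: dpda_lang_def machine_def)
qed

lemma dpda_lang_machine: "dpda_lang machine = rev ` L_z G z"
  using dpda_lang_machine_subset rev_L_z_subset_dpda_lang_machine by blast

end

theorem lemma3p3:
  fixes \<Gamma> :: "(cantor \<Rightarrow> cantor) set" and z :: "bool list"
  assumes "finite \<Gamma>" and "monoid_generating_set \<Gamma>" and "z \<noteq> []"
  shows "L_z \<Gamma> z \<subseteq> cowp \<Gamma> \<and> dcfl \<Gamma> (rev ` L_z \<Gamma> z)"
proof
  show "L_z \<Gamma> z \<subseteq> cowp \<Gamma>"
    by (auto simp: L_z_def cowp_def)
  obtain gs where gs: "set gs = \<Gamma>"
    using assms(1) finite_list by blast
  have "\<forall>g\<in>\<Gamma>. \<exists>P \<phi>. finite P \<and> maximal_prefix_code P \<and> (\<forall>p\<in>P. \<forall>t. g (conc p t) = conc (\<phi> p) t)"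
    using assms(2) by (force simp: monoid_generating_set_def thompson_V_def)
  then obtain P \<phi> where "\<forall>g\<in>\<Gamma>. finite (P g) \<and> maximal_prefix_code (P g) \<and>
      (\<forall>p\<in>P g. \<forall>t. g (conc p t) = conc (\<phi> g p) t)"
    by metis
  then interpret prefix_code_generators \<Gamma> gs P \<phi> z
    using gs by unfold_locales auto
  show "dcfl \<Gamma> (rev ` L_z \<Gamma> z)"
    using dcfl_dpda_lang[OF dpda_wf_machine] by (simp add: dpda_lang_machine)
qed

end
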